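(* For every $\mathrm{Sym}$-invariant lattice $L\subseteq\mathbb{Z}^{(\mathbb{N})}$, the monoid $M=L\cap\mathbb{Z}_{\ge0}^{(\mathbb{N})}$ has a finite equivariant Hilbert basis.
   Context: $\mathbb{N}=\{1,2,\dots\}$. $\mathbb{Z}^{(\mathbb{N})}$ is the group of finitely supported integer sequences (standard basis $\mathbf{e}_i$), $\mathbb{Z}_{\ge0}^{(\mathbb{N})}$ its nonnegative elements; a lattice is a subgroup. $\mathrm{Sym}$ is the group of permutations of $\mathbb{N}$ fixing all but finitely many points, acting by $\sigma(\mathbf{e}_i)=\mathbf{e}_{\sigma(i)}$. A Hilbert basis of a monoid is a minimal generating set w.r.t. $\mathbb{Z}_{\ge0}$-linear combinations; $\mathcal{H}\subseteq M$ is an equivariant Hilbert basis if $\mathrm{Sym}(\mathcal{H})=\{\sigma(\mathbf{h})\}$ is a Hilbert basis of $M$. *)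

theory Defs
  imports Main
begin

text \<open>Finitely supported integer sequences indexed by the positive naturals
  (coordinate 0 is required to be 0).\<close>
definition ZN :: "(nat \<Rightarrow> int) set" where
  "ZN = {v. v 0 = 0 \<and> finite {i. v i \<noteq> 0}}"

definition ZN_nonneg :: "(nat \<Rightarrow> int) set" where
  "ZN_nonneg = {v \<in> ZN. \<forall>i. v i \<ge> 0}"

definition is_lattice :: "(nat \<Rightarrow> int) set \<Rightarrow> bool" where
  "is_lattice L \<longleftrightarrow> L \<subseteq> ZN \<and> (\<lambda>i. 0) \<in> L \<and> (\<forall>u\<in>L. \<forall>v\<in>L. (\<lambda>i. u i + v i) \<in> L) \<and> (\<forall>v\<in>L. (\<lambda>i. - v i) \<in> L)"

definition Sym :: "(nat \<Rightarrow> nat) set" where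
  "Sym = {\<sigma>. bij_betw \<sigma> {1..} {1..} \<and> \<sigma> 0 = 0 \<and> finite {i. \<sigma> i \<noteq> i}}"

text \<open>Action with sigma(e_i) = e_(sigma i).\<close>
definition act :: "(nat \<Rightarrow> nat) \<Rightarrow> (nat \<Rightarrow> int) \<Rightarrow> (nat \<Rightarrow> int)" where
  "act \<sigma> v = (\<lambda>i. v (inv \<sigma> i))"

definition sym_invariant :: "(nat \<Rightarrow> int) set \<Rightarrow> bool" where
  "sym_invariant L \<longleftrightarrow> (\<forall>\<sigma>\<in>Sym. \<forall>v\<in>L. act \<sigma> v \<in> L)"

definition orbit_set :: "(nat \<Rightarrow> int) set \<Rightarrow> (nat \<Rightarrow> int) set" where
  "orbit_set H = {act \<sigma> h | \<sigma> h. \<sigma> \<in> Sym \<and> h \<in> H}"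

definition nn_span :: "(nat \<Rightarrow> int) set \<Rightarrow> (nat \<Rightarrow> int) set" where
  "nn_span B = {v. \<exists>F c. finite F \<and> F \<subseteq> B \<and>
      v = (\<lambda>i. \<Sum>b\<in>F. int (c b) * b i)}"

definition hilbert_basis :: "(nat \<Rightarrow> int) set \<Rightarrow> (nat \<Rightarrow> int) set \<Rightarrow> bool" where
  "hilbert_basis M B \<longleftrightarrow> B \<subseteq> M \<and> nn_span B = M \<and> (\<forall>B'. B' \<subset> B \<longrightarrow> nn_span B' \<noteq> M)"

definition equivariant_hilbert_basis :: "(nat \<Rightarrow> int) set \<Rightarrow> (nat \<Rightarrow> int) set \<Rightarrow> bool" where
  "equivariant_hilbert_basis M H \<longleftrightarrow> H \<subseteq> M \<and> hilbert_basis M (orbit_set H)"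

end

theory Submission
  imports Defs "HOL-Library.Function_Algebras" "HOL-Library.Groups_Big_Fun"
    "HOL-Combinatorics.Permutations"
begin

text \<open>
  The monoid \<open>M = L \<inter> ZN_nonneg\<close> consists of nonnegative vectors and contains \<open>v - w\<close>
  whenever \<open>w \<le> v\<close> lie in it, so its Hilbert basis is the set of its atoms, the minimal
  nonzero elements. Let \<open>d\<close> be the gcd of all entries of vectors in \<open>L\<close>: Sym-invariance
  puts every \<open>d (e\<^sub>k - e\<^sub>l)\<close> into \<open>L\<close>, hence \<open>L\<close> contains every vector with entries
  in \<open>d\<int>\<close> and coordinate sum 0. If \<open>u \<in> L\<close> has coordinate sum \<open>t > 0\<close>, every
  \<open>v \<in> M\<close> with larger coordinate sum dominates some \<open>w\<close> with entries in \<open>d\<int>\<close> and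
  coordinate sum \<open>t\<close>; then \<open>w - u \<in> L\<close>, so \<open>w \<in> M\<close> and \<open>v\<close> is not an atom. Thus every
  atom has coordinate sum, and hence support size, at most \<open>t\<close>, and a finitary permutation
  moves it into the finite set of atoms supported in \<open>{1..t}\<close>.
\<close>

section \<open>Finitary permutations and their action\<close>

lemma Sym_iff_permutes: "\<sigma> \<in> Sym \<longleftrightarrow> (\<exists>S. finite S \<and> 0 \<notin> S \<and> \<sigma> permutes S)"
proof
  assume \<sigma>: "\<sigma> \<in> Sym"
  then have "\<sigma> permutes {1..}"
    by (intro bij_imp_permutes) (auto simp: Sym_def not_less_eq_eq)
  then have "\<sigma> permutes {i. \<sigma> i \<noteq> i}"
    by (rule permutes_superset) auto
  with \<sigma> show "\<exists>S. finite S \<and> 0 \<notin> S \<and> \<sigma> permutes S"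
    by (auto simp: Sym_def)
next
  assume "\<exists>S. finite S \<and> 0 \<notin> S \<and> \<sigma> permutes S"
  then obtain S where S: "finite S" "0 \<notin> S" "\<sigma> permutes S" by blast
  have "\<sigma> permutes {1..}"
    using S(2) by (intro permutes_subset[OF S(3)]) (auto simp: Suc_le_eq intro: gr0I)
  moreover have "{i. \<sigma> i \<noteq> i} \<subseteq> S"
    using permutes_not_in[OF S(3)] by blast
  ultimately show "\<sigma> \<in> Sym"
    using S permutes_not_in[OF S(3), of 0] unfolding Sym_def
    by (auto simp: permutes_imp_bij intro: finite_subset)
qed

lemma Sym_bij: "\<sigma> \<in> Sym \<Longrightarrow> bij \<sigma>"
  by (auto simp: Sym_iff_permutes permutes_bij)

lemma Sym_inv: "\<sigma> \<in> Sym \<Longrightarrow> inv \<sigma> \<in> Sym"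
  by (auto simp: Sym_iff_permutes intro: permutes_inv)

lemma Sym_comp: assumes "\<sigma> \<in> Sym" "\<tau> \<in> Sym" shows "\<tau> \<circ> \<sigma> \<in> Sym"
proof -
  obtain S T where S: "finite S" "0 \<notin> S" "\<sigma> permutes S"
    and T: "finite T" "0 \<notin> T" "\<tau> permutes T"
    using assms by (auto simp: Sym_iff_permutes)
  have "\<tau> \<circ> \<sigma> permutes S \<union> T"
    by (rule permutes_compose[OF permutes_subset[OF S(3)] permutes_subset[OF T(3)]]) auto
  with S T show ?thesis
    unfolding Sym_iff_permutes by (intro exI[of _ "S \<union> T"]) simp
qed

lemma id_in_Sym: "id \<in> Sym"
  unfolding Sym_iff_permutes by (intro exI[of _ "{}"]) simp

lemma transpose_in_Sym: "1 \<le> i \<Longrightarrow> 1 \<le> j \<Longrightarrow> transpose i j \<in> Sym"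
  unfolding Sym_iff_permutes by (rule exI[of _ "{i, j}"]) (auto intro: permutes_swap_id)

lemma ex_Sym_image_subset_initial_segment:
  assumes "finite A" "0 \<notin> A" "card A \<le> n"
  shows "\<exists>\<sigma>\<in>Sym. \<sigma> ` A \<subseteq> {1..n}"
  using assms
proof (induction A rule: finite_induct)
  case empty
  show ?case using id_in_Sym by blast
next
  case (insert a A)
  then obtain \<sigma> where \<sigma>: "\<sigma> \<in> Sym" "\<sigma> ` A \<subseteq> {1..n}"
    by auto
  have inj: "inj \<sigma>"
    using Sym_bij[OF \<sigma>(1)] bij_is_inj by blast
  have "card (\<sigma> ` A) < card {1..n}"
    using insert.hyps insert.prems card_image[OF inj_on_subset[OF inj]] by simp
  then have "\<not> {1..n} \<subseteq> \<sigma> ` A"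
    using card_mono[OF finite_imageI[OF insert.hyps(1)]] by (meson not_le)
  then obtain j where j: "j \<in> {1..n}" "j \<notin> \<sigma> ` A"
    by blast
  have "\<sigma> a \<notin> \<sigma> ` A"
    using insert.hyps(2) inj by (auto dest: injD)
  moreover have "\<sigma> a \<noteq> 0"
    using insert.prems(1) injD[OF inj, of a 0] \<sigma>(1) by (auto simp: Sym_def)
  ultimately have "transpose (\<sigma> a) j \<circ> \<sigma> \<in> Sym" "(transpose (\<sigma> a) j \<circ> \<sigma>) ` insert a A \<subseteq> {1..n}"
    using \<sigma> j by (auto intro!: Sym_comp transpose_in_Sym simp: transpose_def)
  then show ?case
    by blast
qed

lemma act_inv_act: "\<sigma> \<in> Sym \<Longrightarrow> act (inv \<sigma>) (act \<sigma> v) = v"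
  by (simp add: act_def Sym_bij inv_inv_eq bij_is_inj)

lemma act_act_inv: "\<sigma> \<in> Sym \<Longrightarrow> act \<sigma> (act (inv \<sigma>) v) = v"
  by (simp add: act_def Sym_bij inv_inv_eq bij_is_surj surj_f_inv_f)

lemma act_transpose: "act (transpose i j) v = v \<circ> transpose i j"
  by (simp add: act_def fun_eq_iff)

lemma act_zero [simp]: "act \<sigma> 0 = 0"
  by (simp add: act_def fun_eq_iff)

lemma act_mono: "w \<le> v \<Longrightarrow> act \<sigma> w \<le> act \<sigma> v"
  by (simp add: act_def le_fun_def)

section \<open>Finitely supported vectors\<close>

abbreviation supp :: "(nat \<Rightarrow> int) \<Rightarrow> nat set" where
  "supp v \<equiv> {i. v i \<noteq> 0}"

lemma supp_act: assumes "bij \<sigma>" shows "supp (act \<sigma> v) = \<sigma> ` supp v"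
proof -
  have "supp (act \<sigma> v) = inv \<sigma> -` supp v"
    by (auto simp: act_def)
  also have "\<dots> = \<sigma> ` supp v"
    by (simp only: bij_vimage_eq_inv_image[OF bij_imp_bij_inv[OF assms]] inv_inv_eq[OF assms])
  finally show ?thesis .
qed

lemma ZN_diff: assumes "u \<in> ZN" "v \<in> ZN" shows "u - v \<in> ZN"
proof -
  have "supp (u - v) \<subseteq> supp u \<union> supp v"
    by auto
  from finite_subset[OF this] assms show ?thesis
    by (simp add: ZN_def)
qed

lemma ZN_le: assumes "0 \<le> w" "w \<le> v" "v \<in> ZN" shows "w \<in> ZN"
proof -
  have "w i = 0" if "v i = 0" for i
    using assms that unfolding le_fun_def by (metis zero_fun_apply order_antisym)
  then have "w 0 = 0" "supp w \<subseteq> supp v"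
    using assms(3) by (auto simp: ZN_def)
  with assms(3) show ?thesis
    by (auto simp: ZN_def intro: finite_subset)
qed

lemma ZN_nonneg_iff: "v \<in> ZN_nonneg \<longleftrightarrow> v \<in> ZN \<and> 0 \<le> v"
  by (simp add: ZN_nonneg_def le_fun_def)

lemma act_ZN: assumes "\<sigma> \<in> Sym" "v \<in> ZN" shows "act \<sigma> v \<in> ZN"
proof -
  have "inv \<sigma> 0 = 0"
    using Sym_inv[OF assms(1)] by (simp add: Sym_def)
  then show ?thesis
    using assms by (simp add: ZN_def supp_act Sym_bij) (simp add: act_def)
qed

lemma sym_invariant_ZN_nonneg: "sym_invariant ZN_nonneg"
  using act_ZN by (auto simp: sym_invariant_def ZN_nonneg_def) (simp add: act_def)

lemma sym_invariant_Int: "sym_invariant A \<Longrightarrow> sym_invariant B \<Longrightarrow> sym_invariant (A \<inter> B)"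
  by (simp add: sym_invariant_def)

lemma Sum_any_add:
  "finite (supp u) \<Longrightarrow> finite (supp v) \<Longrightarrow> Sum_any (u + v) = Sum_any u + Sum_any v"
  unfolding plus_fun_def by (rule Sum_any.distrib)

lemma Sum_any_diff_ZN:
  assumes "u \<in> ZN" "v \<in> ZN" shows "Sum_any (u - v) = Sum_any u - Sum_any v"
  using Sum_any_add[of "u - v" v] ZN_diff[OF assms] assms by (simp add: ZN_def)

lemma Sum_any_uminus: "Sum_any (- v) = - Sum_any (v :: nat \<Rightarrow> int)"
proof -
  have "{i. (- v) i \<noteq> 0} = supp v"
    by simp
  then show ?thesis
    by (simp only: Sum_any.expand_set) (simp add: sum_negf)
qed

lemma entry_le_Sum_any: assumes "0 \<le> v" "finite (supp v)" shows "v i \<le> Sum_any v"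
proof -
  have "Sum_any v = sum v (insert i (supp v))"
    by (rule Sum_any.expand_superset) (use assms in auto)
  also have "v i \<le> \<dots>"
    using assms by (intro member_le_sum) (auto simp: le_fun_def)
  finally show ?thesis .
qed

lemma card_supp_le_Sum_any: assumes "0 \<le> v" shows "int (card (supp v)) \<le> Sum_any v"
proof -
  have "int (card (supp v)) = (\<Sum>i\<in>supp v. 1)"
    by simp
  also have "\<dots> \<le> (\<Sum>i\<in>supp v. v i)"
    using assms by (intro sum_mono) (auto simp: le_fun_def int_one_le_iff_zero_less order.strict_iff_order)
  finally show ?thesis
    by (simp add: Sum_any.expand_set)
qed

lemma Sum_any_pos: assumes "v \<in> ZN_nonneg" "v \<noteq> 0" shows "0 < Sum_any v"
proof -
  have "supp v \<noteq> {}" "finite (supp v)"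
    using assms by (auto simp: ZN_nonneg_iff ZN_def fun_eq_iff)
  then have "0 < card (supp v)"
    by (simp add: card_gt_0_iff)
  with card_supp_le_Sum_any[of v] assms(1) show ?thesis
    by (simp add: ZN_nonneg_iff)
qed

lemma finite_ZN_nonneg_bounded_support:
  "finite {h \<in> ZN_nonneg. Sum_any h \<le> int s \<and> (\<forall>i>n. h i = 0)}"
proof (rule finite_subset)
  show "finite {f. \<forall>x. (x \<in> {..n} \<longrightarrow> f x \<in> {0..int s}) \<and> (x \<notin> {..n} \<longrightarrow> f x = 0)}"
    by (rule finite_set_of_finite_funs) simp_all
  show "{h \<in> ZN_nonneg. Sum_any h \<le> int s \<and> (\<forall>i>n. h i = 0)}
      \<subseteq> {f. \<forall>x. (x \<in> {..n} \<longrightarrow> f x \<in> {0..int s}) \<and> (x \<notin> {..n} \<longrightarrow> f x = 0)}"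
  proof (intro subsetI CollectI allI conjI impI)
    fix h x assume "h \<in> {h \<in> ZN_nonneg. Sum_any h \<le> int s \<and> (\<forall>i>n. h i = 0)}"
    then have h: "0 \<le> h" "finite (supp h)" "Sum_any h \<le> int s" "\<forall>i>n. h i = 0"
      by (auto simp: ZN_nonneg_iff ZN_def)
    show "h x \<in> {0..int s}"
      using h entry_le_Sum_any[OF h(1,2), of x] by (auto simp: le_fun_def)
    show "x \<notin> {..n} \<Longrightarrow> h x = 0"
      using h(4) by simp
  qed
qed

section \<open>Atoms of a monoid of nonnegative vectors\<close>

definition add_submonoid :: "'a::monoid_add set \<Rightarrow> bool" where
  "add_submonoid M \<longleftrightarrow> 0 \<in> M \<and> (\<forall>u\<in>M. \<forall>v\<in>M. u + v \<in> M)"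

lemma add_submonoid_sum:
  fixes M :: "'a::comm_monoid_add set"
  assumes "add_submonoid M" "\<And>x. x \<in> F \<Longrightarrow> f x \<in> M"
  shows "sum f F \<in> M"
  using assms(2)
  by (induction F rule: infinite_finite_induct) (use assms(1) in \<open>auto simp: add_submonoid_def\<close>)

lemma sum_fun_apply: "(\<Sum>x\<in>F. f x) i = (\<Sum>x\<in>F. f x i)"
  by (induction F rule: infinite_finite_induct) auto

lemma add_submonoid_nat_mult:
  assumes "add_submonoid M" "v \<in> M" shows "(\<lambda>i. int n * v i) \<in> M"
proof -
  have "(\<Sum>_\<in>{..<n}. v) \<in> M"
    using assms by (intro add_submonoid_sum) auto
  then show ?thesis
    by (simp add: sum_fun_apply[abs_def])
qed

lemma nn_span_zero: "0 \<in> nn_span B"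
  unfolding nn_span_def by (auto simp: zero_fun_def intro!: exI[of _ "{}"])

lemma nn_span_base: "b \<in> B \<Longrightarrow> b \<in> nn_span B"
  unfolding nn_span_def by (auto intro!: exI[of _ "{b}"] exI[of _ "\<lambda>_. 1"])

lemma nn_span_add:
  assumes "x \<in> nn_span B" "y \<in> nn_span B" shows "x + y \<in> nn_span B"
proof -
  obtain F c where F: "finite F" "F \<subseteq> B" and x: "x = (\<lambda>i. \<Sum>b\<in>F. int (c b) * b i)"
    using assms(1) by (auto simp: nn_span_def)
  obtain G e where G: "finite G" "G \<subseteq> B" and y: "y = (\<lambda>i. \<Sum>b\<in>G. int (e b) * b i)"
    using assms(2) by (auto simp: nn_span_def)
  let ?ce = "\<lambda>b. (if b \<in> F then c b else 0) + (if b \<in> G then e b else 0)"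
  have "(\<Sum>b\<in>F \<union> G. int (?ce b) * b i) = x i + y i" for i
  proof -
    have "(\<Sum>b\<in>F \<union> G. int (?ce b) * b i)
        = (\<Sum>b\<in>F \<union> G. if b \<in> F then int (c b) * b i else 0)
          + (\<Sum>b\<in>F \<union> G. if b \<in> G then int (e b) * b i else 0)"
      unfolding sum.distrib[symmetric] by (intro sum.cong) (auto simp: distrib_right)
    also have "\<dots> = x i + y i"
      using F G by (simp add: sum.inter_restrict[symmetric] Int_absorb1 x y)
    finally show ?thesis .
  qed
  then have "x + y = (\<lambda>i. \<Sum>b\<in>F \<union> G. int (?ce b) * b i)"
    by (simp add: fun_eq_iff)
  with F G show ?thesis
    unfolding nn_span_def by (intro CollectI exI[of _ "F \<union> G"] exI[of _ ?ce]) simp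
qed

lemma nn_span_subset:
  assumes "add_submonoid M" "B \<subseteq> M" shows "nn_span B \<subseteq> M"
proof
  fix x assume "x \<in> nn_span B"
  then obtain F c where "F \<subseteq> B" and x: "x = (\<lambda>i. \<Sum>b\<in>F. int (c b) * b i)"
    by (auto simp: nn_span_def)
  have "(\<Sum>b\<in>F. (\<lambda>i. int (c b) * b i)) \<in> M"
    using \<open>F \<subseteq> B\<close> assms by (intro add_submonoid_sum add_submonoid_nat_mult) auto
  then show "x \<in> M"
    by (simp add: x sum_fun_apply[abs_def])
qed

lemma nn_span_generator_le:
  assumes "x \<in> nn_span B" "\<And>b. b \<in> B \<Longrightarrow> 0 \<le> b" "x i \<noteq> 0"
  obtains b where "b \<in> B" "b i \<noteq> 0" "b \<le> x"
proof -
  obtain F c where F: "finite F" "F \<subseteq> B" and x: "x = (\<lambda>i. \<Sum>b\<in>F. int (c b) * b i)"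
    using assms(1) by (auto simp: nn_span_def)
  obtain b where b: "b \<in> F" "int (c b) * b i \<noteq> 0"
    using assms(3) by (auto simp: x elim: sum.not_neutral_contains_not_neutral)
  have nonneg: "0 \<le> b' k" if "b' \<in> F" for b' k
    using assms(2) F(2) that by (auto simp: le_fun_def)
  have "b \<le> x"
  proof (rule le_funI)
    fix k
    have "b k \<le> int (c b) * b k"
      using b(2) nonneg[OF b(1), of k] by (simp add: mult_le_cancel_right1)
    also have "\<dots> \<le> x k"
      unfolding x using F(1) b(1) nonneg by (auto intro: member_le_sum)
    finally show "b k \<le> x k" .
  qed
  with b F(2) that show thesis
    by auto
qed

definition atoms :: "(nat \<Rightarrow> int) set \<Rightarrow> (nat \<Rightarrow> int) set" where
  "atoms M = {v \<in> M. v \<noteq> 0 \<and> (\<forall>w\<in>M. w \<le> v \<longrightarrow> w = 0 \<or> w = v)}"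

lemma nn_span_atoms:
  assumes "M \<subseteq> ZN_nonneg" and diff: "\<And>u v. u \<in> M \<Longrightarrow> v \<in> M \<Longrightarrow> u \<le> v \<Longrightarrow> v - u \<in> M"
    and "v \<in> M"
  shows "v \<in> nn_span (atoms M)"
  using \<open>v \<in> M\<close>
proof (induction "nat (Sum_any v)" arbitrary: v rule: less_induct)
  case less
  show ?case
  proof (cases "v = 0 \<or> v \<in> atoms M")
    case True
    then show ?thesis using nn_span_zero nn_span_base by auto
  next
    case False
    then obtain w where w: "w \<in> M" "w \<le> v" "w \<noteq> 0" "w \<noteq> v"
      using less.prems by (auto simp: atoms_def)
    have "v - w \<in> M" "v - w \<noteq> 0"
      using diff[OF w(1) less.prems w(2)] w(4) by auto
    then have pos: "0 < Sum_any w" "0 < Sum_any (v - w)"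
      using Sum_any_pos[of w] Sum_any_pos[of "v - w"] assms(1) w(1,3) by blast+
    have "Sum_any v = Sum_any w + Sum_any (v - w)"
      using Sum_any_diff_ZN assms(1) w(1) less.prems by (force simp: ZN_nonneg_iff)
    then have "w \<in> nn_span (atoms M)" "v - w \<in> nn_span (atoms M)"
      using less.hyps pos w(1) \<open>v - w \<in> M\<close> by auto
    then show ?thesis
      using nn_span_add by fastforce
  qed
qed

lemma hilbert_basis_atoms:
  assumes "add_submonoid M" "M \<subseteq> ZN_nonneg"
    and "\<And>u v. u \<in> M \<Longrightarrow> v \<in> M \<Longrightarrow> u \<le> v \<Longrightarrow> v - u \<in> M"
  shows "hilbert_basis M (atoms M)"
  unfolding hilbert_basis_def
proof (intro conjI allI impI)
  show atoms_M: "atoms M \<subseteq> M"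
    by (auto simp: atoms_def)
  show "nn_span (atoms M) = M"
    using nn_span_subset[OF assms(1) atoms_M] nn_span_atoms[OF assms(2,3)] by blast
  show "nn_span B' \<noteq> M" if sub: "B' \<subset> atoms M" for B'
  proof
    assume span: "nn_span B' = M"
    obtain a where a: "a \<in> atoms M" "a \<notin> B'"
      using psubset_imp_ex_mem[OF sub] by blast
    then obtain i where "a i \<noteq> 0"
      by (auto simp: atoms_def fun_eq_iff)
    moreover have "a \<in> nn_span B'"
      using a span by (auto simp: atoms_def)
    moreover have "B' \<subseteq> ZN_nonneg"
      using sub atoms_M assms(2) by blast
    ultimately obtain b where "b \<in> B'" "b i \<noteq> 0" "b \<le> a"
      using nn_span_generator_le by (metis ZN_nonneg_iff subsetD)
    then have "b = a"
      using a(1) sub by (auto simp: atoms_def)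
    with a(2) \<open>b \<in> B'\<close> show False
      by simp
  qed
qed

lemma sym_invariant_atoms:
  assumes "sym_invariant M" shows "sym_invariant (atoms M)"
  unfolding sym_invariant_def
proof (intro ballI)
  fix \<sigma> v assume \<sigma>: "\<sigma> \<in> Sym" and v: "v \<in> atoms M"
  have "act \<sigma> v \<in> M"
    using assms \<sigma> v by (auto simp: sym_invariant_def atoms_def)
  moreover have "act \<sigma> v \<noteq> 0"
    using act_inv_act[OF \<sigma>, of v] v by (auto simp: atoms_def)
  moreover have "w = 0 \<or> w = act \<sigma> v" if "w \<in> M" "w \<le> act \<sigma> v" for w
  proof -
    have "act (inv \<sigma>) w \<in> M"
      using assms Sym_inv[OF \<sigma>] that(1) by (simp add: sym_invariant_def)
    moreover have "act (inv \<sigma>) w \<le> v"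
      using act_mono[OF that(2), of "inv \<sigma>"] by (simp add: act_inv_act[OF \<sigma>])
    ultimately have "act (inv \<sigma>) w = 0 \<or> act (inv \<sigma>) w = v"
      using v by (auto simp: atoms_def)
    then show ?thesis
      by (metis act_act_inv[OF \<sigma>] act_zero)
  qed
  ultimately show "act \<sigma> v \<in> atoms M"
    by (simp add: atoms_def)
qed

lemma orbit_set_support_initial_segment:
  assumes "sym_invariant A" "A \<subseteq> ZN" "\<And>v. v \<in> A \<Longrightarrow> card (supp v) \<le> n"
  shows "orbit_set {h \<in> A. \<forall>i>n. h i = 0} = A"
proof
  show "orbit_set {h \<in> A. \<forall>i>n. h i = 0} \<subseteq> A"
    using assms(1) by (auto simp: orbit_set_def sym_invariant_def)
  show "A \<subseteq> orbit_set {h \<in> A. \<forall>i>n. h i = 0}"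
  proof
    fix v assume v: "v \<in> A"
    then have "finite (supp v)" "0 \<notin> supp v"
      using assms(2) by (auto simp: ZN_def)
    then obtain \<sigma> where \<sigma>: "\<sigma> \<in> Sym" "\<sigma> ` supp v \<subseteq> {1..n}"
      using ex_Sym_image_subset_initial_segment assms(3)[OF v] by blast
    have "i \<notin> supp (act \<sigma> v)" if "n < i" for i
      using that \<sigma>(2) unfolding supp_act[OF Sym_bij[OF \<sigma>(1)]] by auto
    then have "\<forall>i>n. act \<sigma> v i = 0"
      by blast
    moreover have "act \<sigma> v \<in> A"
      using assms(1) \<sigma>(1) v by (simp add: sym_invariant_def)
    moreover have "v = act (inv \<sigma>) (act \<sigma> v)"
      using act_inv_act[OF \<sigma>(1)] by simp
    ultimately show "v \<in> orbit_set {h \<in> A. \<forall>i>n. h i = 0}"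
      unfolding orbit_set_def using Sym_inv[OF \<sigma>(1)] by blast
  qed
qed

section \<open>Sym-invariant lattices\<close>

lemma lattice_add_submonoid: "is_lattice L \<Longrightarrow> add_submonoid L"
  by (simp add: is_lattice_def add_submonoid_def zero_fun_def plus_fun_def)

lemma lattice_add: "is_lattice L \<Longrightarrow> u \<in> L \<Longrightarrow> v \<in> L \<Longrightarrow> u + v \<in> L"
  by (simp add: is_lattice_def plus_fun_def)

lemma lattice_uminus: "is_lattice L \<Longrightarrow> v \<in> L \<Longrightarrow> - v \<in> L"
  by (simp add: is_lattice_def fun_Compl_def)

lemma lattice_diff: "is_lattice L \<Longrightarrow> u \<in> L \<Longrightarrow> v \<in> L \<Longrightarrow> u - v \<in> L"
  by (metis diff_conv_add_uminus lattice_add lattice_uminus)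

lemma lattice_ZN: "is_lattice L \<Longrightarrow> v \<in> L \<Longrightarrow> v \<in> ZN"
  by (auto simp: is_lattice_def)

lemma lattice_int_mult:
  assumes "is_lattice L" "v \<in> L" shows "(\<lambda>i. k * v i) \<in> L"
proof (cases "0 \<le> k")
  case True
  then show ?thesis
    using add_submonoid_nat_mult[OF lattice_add_submonoid[OF assms(1)] assms(2), of "nat k"] by simp
next
  case False
  then show ?thesis
    using lattice_uminus[OF assms(1) add_submonoid_nat_mult[OF lattice_add_submonoid[OF assms(1)] assms(2), of "nat (- k)"]]
    by (simp add: fun_Compl_def)
qed

lemma hilbert_basis_lattice_nonneg:
  assumes "is_lattice L" shows "hilbert_basis (L \<inter> ZN_nonneg) (atoms (L \<inter> ZN_nonneg))"
proof (rule hilbert_basis_atoms)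
  show "add_submonoid (L \<inter> ZN_nonneg)"
    using lattice_add_submonoid[OF assms] lattice_ZN[OF assms]
    by (auto simp: add_submonoid_def ZN_nonneg_iff)
  show "v - u \<in> L \<inter> ZN_nonneg" if "u \<in> L \<inter> ZN_nonneg" "v \<in> L \<inter> ZN_nonneg" "u \<le> v" for u v
    using that lattice_diff[OF assms] lattice_ZN[OF assms] by (auto simp: ZN_nonneg_iff le_fun_def)
qed simp

lemma int_subgroup_principal:
  fixes S :: "int set"
  assumes "a \<in> S" "a \<noteq> 0"
    and diff: "\<And>x y. x \<in> S \<Longrightarrow> y \<in> S \<Longrightarrow> x - y \<in> S"
    and mult: "\<And>k x. x \<in> S \<Longrightarrow> k * x \<in> S"
  shows "\<exists>d>0. d \<in> S \<and> (\<forall>x\<in>S. d dvd x)"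
proof -
  have "\<bar>a\<bar> \<in> S"
    using mult[OF assms(1), of "sgn a"] by (simp add: abs_sgn mult.commute)
  then have "\<exists>n::nat. 0 < n \<and> int n \<in> S"
    using assms(2) by (intro exI[of _ "nat \<bar>a\<bar>"]) simp
  then obtain n :: nat where n: "0 < n" "int n \<in> S" and least: "\<And>m. m < n \<Longrightarrow> \<not> (0 < m \<and> int m \<in> S)"
    unfolding exists_least_iff[of "\<lambda>n. 0 < n \<and> int n \<in> S"] by blast
  have "int n dvd x" if "x \<in> S" for x
  proof -
    have "x mod int n = x - (x div int n) * int n"
      by (simp add: minus_div_mult_eq_mod)
    then have "x mod int n \<in> S"
      using diff mult n(2) that by metis
    moreover have "0 \<le> x mod int n" "x mod int n < int n"
      using n(1) by auto
    ultimately have "x mod int n = 0"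
      using least[of "nat (x mod int n)"] by (auto simp: nat_less_iff)
    then show ?thesis by presburger
  qed
  with n show ?thesis
    by (intro exI[of _ "int n"]) auto
qed

definition unit_diff :: "nat \<Rightarrow> nat \<Rightarrow> int \<Rightarrow> nat \<Rightarrow> int" where
  "unit_diff i j a = (\<lambda>k. if k = i then a else if k = j then - a else 0)"

lemma unit_diff_diff: "unit_diff i j (a - b) = unit_diff i j a - unit_diff i j b"
  by (simp add: unit_diff_def fun_eq_iff)

lemma unit_diff_mult: "unit_diff i j (c * a) = (\<lambda>k. c * unit_diff i j a k)"
  by (simp add: unit_diff_def fun_eq_iff)

lemma act_unit_diff:
  assumes "bij \<sigma>" shows "act \<sigma> (unit_diff i j a) = unit_diff (\<sigma> i) (\<sigma> j) a"
proof -
  have "inv \<sigma> k = m \<longleftrightarrow> k = \<sigma> m" for k m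
    using assms by (metis bij_inv_eq_iff)
  then show ?thesis
    by (simp add: act_def unit_diff_def fun_eq_iff)
qed

lemma unit_diff_in_lattice:
  assumes "is_lattice L" "sym_invariant L" "v \<in> L" "1 \<le> i" "1 \<le> j" "i \<noteq> j"
  shows "unit_diff i j (v i - v j) \<in> L"
proof -
  have "v - act (transpose i j) v \<in> L"
    using assms transpose_in_Sym by (auto simp: sym_invariant_def intro: lattice_diff)
  moreover have "v - act (transpose i j) v = unit_diff i j (v i - v j)"
    using assms(6) by (auto simp: act_transpose unit_diff_def fun_eq_iff transpose_def)
  ultimately show ?thesis by simp
qed

lemma unit_diff_move:
  assumes "sym_invariant L" "unit_diff i j a \<in> L" "1 \<le> i" "1 \<le> j" "i \<noteq> j"
    and "1 \<le> k" "1 \<le> l" "k \<noteq> l"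
  shows "unit_diff k l a \<in> L"
proof -
  define \<sigma> where "\<sigma> = transpose (transpose i k j) l \<circ> transpose i k"
  have "\<sigma> \<in> Sym"
    unfolding \<sigma>_def using assms
    by (intro Sym_comp transpose_in_Sym) (auto simp: transpose_def)
  moreover have "\<sigma> i = k" "\<sigma> j = l"
    using assms(5,8) by (auto simp: \<sigma>_def transpose_def)
  moreover have "act \<sigma> (unit_diff i j a) \<in> L"
    using assms(1,2) \<open>\<sigma> \<in> Sym\<close> by (simp add: sym_invariant_def)
  ultimately show ?thesis
    using act_unit_diff[OF Sym_bij, of \<sigma> i j a] by simp
qed

lemma unit_diff_entry_in_lattice:
  assumes "is_lattice L" "sym_invariant L" "v \<in> L" "1 \<le> i"
  shows "unit_diff 1 2 (v i) \<in> L"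
proof -
  have "finite (insert 0 (insert i (supp v)))"
    using lattice_ZN[OF assms(1,3)] by (simp add: ZN_def)
  then obtain j where "j \<notin> insert 0 (insert i (supp v))"
    using ex_new_if_finite[OF infinite_UNIV_nat] by blast
  then have j: "1 \<le> j" "j \<noteq> i" "v j = 0"
    by auto
  then have "unit_diff i j (v i) \<in> L"
    using unit_diff_in_lattice[OF assms(1-4) j(1)] by simp
  then show ?thesis
    by (rule unit_diff_move[OF assms(2)]) (use assms(4) j in auto)
qed

lemma lattice_divisor:
  assumes "is_lattice L" "sym_invariant L" "u \<in> L" "u \<noteq> 0"
  obtains d where "0 < d" "\<And>v k. v \<in> L \<Longrightarrow> d dvd v k"
    "\<And>k l c. 1 \<le> k \<Longrightarrow> 1 \<le> l \<Longrightarrow> k \<noteq> l \<Longrightarrow> unit_diff k l (c * d) \<in> L"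
proof -
  let ?G = "{a. unit_diff 1 2 a \<in> L}"
  obtain i where i: "u i \<noteq> 0"
    using assms(4) by (auto simp: fun_eq_iff)
  moreover have "1 \<le> i"
    using i lattice_ZN[OF assms(1,3)] by (cases i) (auto simp: ZN_def)
  ultimately have "u i \<in> ?G"
    using unit_diff_entry_in_lattice[OF assms(1-3)] by blast
  moreover have "x - y \<in> ?G" if "x \<in> ?G" "y \<in> ?G" for x y
    using lattice_diff[OF assms(1), of "unit_diff 1 2 x" "unit_diff 1 2 y"] that
    by (simp add: unit_diff_diff)
  moreover have "k * x \<in> ?G" if "x \<in> ?G" for k x
    using lattice_int_mult[OF assms(1), of "unit_diff 1 2 x" k] that
    by (simp add: unit_diff_mult)
  ultimately obtain d where d: "0 < d" "d \<in> ?G" "\<forall>x\<in>?G. d dvd x"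
    using int_subgroup_principal[of "u i" ?G] i by blast
  show thesis
  proof
    show "0 < d" by fact
    show "d dvd v k" if "v \<in> L" for v k
    proof (cases k)
      case 0
      then show ?thesis using lattice_ZN[OF assms(1) that] by (simp add: ZN_def)
    next
      case (Suc m)
      then show ?thesis using d(3) unit_diff_entry_in_lattice[OF assms(1,2) that, of k] by simp
    qed
    show "unit_diff k l (c * d) \<in> L" if "1 \<le> k" "1 \<le> l" "k \<noteq> l" for k l c
    proof (rule unit_diff_move[OF assms(2) _ _ _ _ that, of 1 2])
      show "unit_diff 1 2 (c * d) \<in> L"
        using lattice_int_mult[OF assms(1), of "unit_diff 1 2 d" c] d(2)
        by (simp add: unit_diff_mult)
    qed simp_all
  qed
qed

lemma sum_zero_in_lattice:
  assumes "is_lattice L"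
    and moves: "\<And>k l c. 1 \<le> k \<Longrightarrow> 1 \<le> l \<Longrightarrow> k \<noteq> l \<Longrightarrow> unit_diff k l (c * d) \<in> L"
    and x: "x \<in> ZN" "Sum_any x = 0" "\<And>k. d dvd x k"
  shows "x \<in> L"
proof -
  define F where "F = supp x - {1}"
  have fin: "finite F" and "0 \<notin> F" "1 \<notin> F"
    using x(1) by (auto simp: ZN_def F_def)
  have "(\<Sum>i\<in>F. unit_diff i 1 (x i)) \<in> L"
  proof (rule add_submonoid_sum[OF lattice_add_submonoid[OF assms(1)]])
    fix i assume "i \<in> F"
    then have "1 \<le> i" "i \<noteq> 1"
      using \<open>0 \<notin> F\<close> \<open>1 \<notin> F\<close> by (auto simp: Suc_le_eq intro: gr0I)
    then show "unit_diff i 1 (x i) \<in> L"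
      using moves[of i 1 "x i div d"] x(3)[of i] by simp
  qed
  moreover have "(\<Sum>i\<in>F. unit_diff i 1 (x i)) = x"
  proof
    fix k
    have "Sum_any x = sum x (insert 1 F)"
      by (rule Sum_any.expand_superset) (use fin in \<open>auto simp: F_def\<close>)
    then have "x 1 = - sum x F"
      using x(2) fin \<open>1 \<notin> F\<close> by simp
    show "(\<Sum>i\<in>F. unit_diff i 1 (x i)) k = x k"
    proof (cases "k = 1")
      case True
      have "(\<Sum>i\<in>F. unit_diff i 1 (x i) 1) = (\<Sum>i\<in>F. - x i)"
        using \<open>1 \<notin> F\<close> by (intro sum.cong) (auto simp: unit_diff_def)
      with \<open>x 1 = - sum x F\<close> True show ?thesis
        by (simp add: sum_fun_apply sum_negf)
    next
      case False
      then have "(\<Sum>i\<in>F. unit_diff i 1 (x i) k) = (\<Sum>i\<in>F. if k = i then x i else 0)"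
        by (intro sum.cong) (auto simp: unit_diff_def)
      also have "\<dots> = x k"
        using fin False by (simp add: F_def)
      finally show ?thesis
        by (simp add: sum_fun_apply)
    qed
  qed
  ultimately show ?thesis by simp
qed

lemma ex_le_Sum_any_eq_multiple:
  assumes "0 < d" "v \<in> ZN" "0 \<le> v" "\<And>i. d dvd v i" "int n * d \<le> Sum_any v"
  shows "\<exists>w. 0 \<le> w \<and> w \<le> v \<and> (\<forall>i. d dvd w i) \<and> Sum_any w = int n * d"
  using assms(5)
proof (induction n)
  case 0
  show ?case
    using assms(3) by (intro exI[of _ 0]) (auto simp: le_fun_def)
next
  case (Suc n)
  have "int n * d \<le> Sum_any v"
    using Suc.prems assms(1) by (simp add: algebra_simps)
  then obtain w where w: "0 \<le> w" "w \<le> v" "\<forall>i. d dvd w i" "Sum_any w = int n * d"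
    using Suc.IH by blast
  have "w \<noteq> v"
    using w(4) Suc.prems assms(1) by auto
  then obtain i where "w i \<noteq> v i"
    by (auto simp: fun_eq_iff)
  then have "w i < v i"
    using w(2) by (auto simp: le_fun_def order_less_le)
  moreover have "d dvd v i - w i"
    using assms(4) w(3) by auto
  ultimately have room: "w i + d \<le> v i"
    using zdvd_imp_le by fastforce
  define e where "e = (\<lambda>k. if k = i then d else 0)"
  have "Sum_any (w + e) = Sum_any w + d"
    using Sum_any_add[of w e] ZN_le[OF w(1,2) assms(2)] by (simp add: ZN_def e_def)
  then show ?case
    using w room assms(1) by (intro exI[of _ "w + e"]) (auto simp: e_def le_fun_def algebra_simps)
qed

lemma atom_Sum_any_le:
  assumes "is_lattice L" "sym_invariant L" "u \<in> L" "0 < Sum_any u"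
    and "v \<in> atoms (L \<inter> ZN_nonneg)"
  shows "Sum_any v \<le> Sum_any u"
proof (rule ccontr)
  assume less: "\<not> Sum_any v \<le> Sum_any u"
  have "u \<noteq> 0"
    using assms(4) by auto
  then obtain d where d: "0 < d" "\<And>v k. v \<in> L \<Longrightarrow> d dvd v k"
    and moves: "\<And>k l c. 1 \<le> k \<Longrightarrow> 1 \<le> l \<Longrightarrow> k \<noteq> l \<Longrightarrow> unit_diff k l (c * d) \<in> L"
    using lattice_divisor[OF assms(1-3)] by blast
  have v: "v \<in> L" "v \<in> ZN" "0 \<le> v"
    and v_atom: "\<And>w. w \<in> L \<inter> ZN_nonneg \<Longrightarrow> w \<le> v \<Longrightarrow> w = 0 \<or> w = v"
    using assms(5) by (auto simp: atoms_def ZN_nonneg_iff)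
  have u: "u \<in> ZN"
    using lattice_ZN[OF assms(1,3)] .
  have "d dvd Sum_any u"
    using d(2)[OF assms(3)] by (simp add: Sum_any.expand_set dvd_sum)
  then obtain q where q: "Sum_any u = q * d"
    by (metis dvdE mult.commute)
  with assms(4) d(1) have "0 \<le> q"
    by (simp add: zero_less_mult_iff)
  with q less obtain w where w: "0 \<le> w" "w \<le> v" "\<forall>i. d dvd w i" "Sum_any w = Sum_any u"
    using ex_le_Sum_any_eq_multiple[OF d(1) v(2,3) d(2)[OF v(1)], of "nat q"] by auto
  have wZ: "w \<in> ZN"
    using ZN_le[OF w(1,2) v(2)] .
  have "w - u \<in> L"
    using sum_zero_in_lattice[OF assms(1) moves] ZN_diff[OF wZ u] Sum_any_diff_ZN[OF wZ u]
      w(3,4) d(2)[OF assms(3)] by auto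
  then have "w \<in> L"
    using lattice_add[OF assms(1) _ assms(3)] by fastforce
  then have "w = 0 \<or> w = v"
    using v_atom w(1,2) wZ by (auto simp: ZN_nonneg_iff)
  then show False
    using w(4) assms(4) less by auto
qed

lemma atoms_Sum_any_bounded:
  assumes "is_lattice L" "sym_invariant L"
  obtains s :: nat where "\<And>v. v \<in> atoms (L \<inter> ZN_nonneg) \<Longrightarrow> Sum_any v \<le> int s"
proof (cases "\<exists>u\<in>L. Sum_any u \<noteq> 0")
  case True
  then obtain u where "u \<in> L" "0 < Sum_any u"
    using lattice_uminus[OF assms(1)] Sum_any_uminus by (metis neg_0_less_iff_less linorder_neqE)
  then show thesis
    using atom_Sum_any_le[OF assms] that[of "nat (Sum_any u)"] by fastforce
next
  case False
  have "atoms (L \<inter> ZN_nonneg) = {}"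
    using False Sum_any_pos by (fastforce simp: atoms_def)
  then show thesis
    using that by blast
qed

theorem lemma4p8:
  fixes L :: "(nat \<Rightarrow> int) set"
  assumes "is_lattice L" and "sym_invariant L"
  shows "\<exists>H. finite H \<and> equivariant_hilbert_basis (L \<inter> ZN_nonneg) H"
proof -
  let ?A = "atoms (L \<inter> ZN_nonneg)"
  obtain s where s: "\<And>v. v \<in> ?A \<Longrightarrow> Sum_any v \<le> int s"
    using atoms_Sum_any_bounded[OF assms] by blast
  have A: "?A \<subseteq> L \<inter> ZN_nonneg"
    by (auto simp: atoms_def)
  define H where "H = {h \<in> ?A. \<forall>i>s. h i = 0}"
  have "finite H"
    using A s by (intro finite_subset[OF _ finite_ZN_nonneg_bounded_support[of s s]]) (auto simp: H_def)
  have "card (supp v) \<le> s" if "v \<in> ?A" for v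
    using card_supp_le_Sum_any[of v] s[OF that] A that by (force simp: ZN_nonneg_iff)
  then have "orbit_set H = ?A"
    unfolding H_def using A assms(2)
    by (intro orbit_set_support_initial_segment sym_invariant_atoms sym_invariant_Int sym_invariant_ZN_nonneg)
      (auto simp: ZN_nonneg_iff)
  moreover have "H \<subseteq> L \<inter> ZN_nonneg"
    using A by (auto simp: H_def)
  ultimately show ?thesis
    using \<open>finite H\<close> hilbert_basis_lattice_nonneg[OF assms(1)]
    unfolding equivariant_hilbert_basis_def by (intro exI[of _ H]) simp
qed

end
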